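(* Let $\tau>\frac{3+\sqrt{17}}{2}$, $\gamma>0$, $\alpha\in D_{\gamma,\tau}$ with convergents $p_n/q_n$. Suppose that $\alpha-\frac{p_n}{q_n}>\frac{\gamma}{q_n^{\tau+1}}$ for every even $n$, and that for infinitely many even $m$ one has, for all even $n<m$, $$\frac{p_n}{q_n}+\frac{\gamma}{q_n^{\tau+1}}<\frac{p_m}{q_m}-\frac{\gamma}{q_m^{\tau+1}}-\frac{2\gamma}{q_m^{\tau-1}}.$$ Then $\alpha$ is an accumulation point of $D_{\gamma,\tau}$.
   Context: For $x\in\mathbb{R}$, $\|x\|:=\min_{p\in\mathbb{Z}}|x-p|$; $\mathbb{N}=\{1,2,\dots\}$. For $\gamma>0,\tau\ge1$, $D_{\gamma,\tau}:=\{\alpha\in(0,1): \|q\alpha\|\ge\gamma/q^\tau\ \forall q\in\mathbb{N}\}$; its elements are irrational. For irrational $\alpha\in(0,1)$ write $\alpha=\cfrac{1}{a_1+\cfrac{1}{a_2+\cdots}}$, and let $p_n/q_n$ ($n\ge0$) be its convergents: $p_{-1}=1,q_{-1}=0,p_0=0,q_0=1$, $p_n=a_np_{n-1}+p_{n-2}$, $q_n=a_nq_{n-1}+q_{n-2}$. Even-indexed convergents lie below $\alpha$. *)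

theory Defs
  imports "HOL-Analysis.Analysis"
begin

definition dist_int :: "real \<Rightarrow> real" where
  "dist_int x = (INF p\<in>(\<int>::real set). \<bar>x - p\<bar>)"

definition Dioph :: "real \<Rightarrow> real \<Rightarrow> real set" where
  "Dioph \<gamma> \<tau> = {\<alpha>. 0 < \<alpha> \<and> \<alpha> < 1 \<and>
      (\<forall>q::nat. q \<ge> 1 \<longrightarrow> dist_int (real q * \<alpha>) \<ge> \<gamma> / real q powr \<tau>)}"

fun cf_rem :: "real \<Rightarrow> nat \<Rightarrow> real" where
  "cf_rem \<alpha> 0 = \<alpha>"
| "cf_rem \<alpha> (Suc n) = 1 / cf_rem \<alpha> n - of_int \<lfloor>1 / cf_rem \<alpha> n\<rfloor>"

text \<open>Partial quotients a_n for n >= 1: alpha = 1/(a_1 + 1/(a_2 + ...)).\<close>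
definition cf_a :: "real \<Rightarrow> nat \<Rightarrow> int" where
  "cf_a \<alpha> n = \<lfloor>1 / cf_rem \<alpha> (n - 1)\<rfloor>"

text \<open>Convergents, shifted by one: cf_pq alpha n = (p_{n-1}, q_{n-1}),
  so that cf_pq alpha 0 = (p_{-1}, q_{-1}) = (1, 0), cf_pq alpha 1 = (p_0,q_0) = (0,1).\<close>
fun cf_pq :: "real \<Rightarrow> nat \<Rightarrow> int \<times> int" where
  "cf_pq \<alpha> 0 = (1, 0)"
| "cf_pq \<alpha> (Suc 0) = (0, 1)"
| "cf_pq \<alpha> (Suc (Suc n)) =
     (cf_a \<alpha> (Suc n) * fst (cf_pq \<alpha> (Suc n)) + fst (cf_pq \<alpha> n),
      cf_a \<alpha> (Suc n) * snd (cf_pq \<alpha> (Suc n)) + snd (cf_pq \<alpha> n))"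

definition cf_p :: "real \<Rightarrow> nat \<Rightarrow> int" where
  "cf_p \<alpha> n = fst (cf_pq \<alpha> (Suc n))"

definition cf_q :: "real \<Rightarrow> nat \<Rightarrow> int" where
  "cf_q \<alpha> n = snd (cf_pq \<alpha> (Suc n))"

end

(*
  Take a large index m of the given infinite set and put Q = q_m, B = p_m/q_m; as m is even,
  B < alpha < B + 1/Q^2.  A point of D_{gamma,tau} is found in [R - delta, R], where
  R = B - gamma/Q^(tau+1) and delta = 2 gamma/Q^(tau-1), so within 2/Q of alpha.

  Fractions p/q with q <= Q keep a distance gamma/q^(tau+1) from the whole interval: those
  above alpha because alpha lies in D_{gamma,tau}, those in [B, alpha) because their denominator
  is at least Q.  A close one below B has q^tau < Q, so for q > 1 it satisfies Legendre's
  criterion |alpha - p/q| < 1/(2 q^2) and is an even convergent p_n/q_n with n < m (for q = 1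
  it lies below p_0/q_0 = 0); but the hypothesis places these convergents below R - delta by
  more than gamma/q_n^(tau+1).  Fractions with q > Q are handled by measure: their
  gamma/q^(tau+1)-neighbourhoods cover at most 2 gamma delta/Q^(tau-1) + 6 gamma/Q^tau < delta
  of the interval.
*)
theory Submission
  imports Defs "HOL-Real_Asymp.Real_Asymp"
begin

section \<open>Diophantine numbers\<close>

lemma le_dist_int_iff: "c \<le> dist_int x \<longleftrightarrow> (\<forall>p\<in>\<int>. c \<le> \<bar>x - p\<bar>)"
proof
  assume "c \<le> dist_int x"
  moreover have "dist_int x \<le> \<bar>x - p\<bar>" if "p \<in> \<int>" for p
    unfolding dist_int_def using that by (intro cINF_lower) (auto intro: bdd_belowI[of _ 0])
  ultimately show "\<forall>p\<in>\<int>. c \<le> \<bar>x - p\<bar>" by (meson order_trans)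
next
  assume "\<forall>p\<in>\<int>. c \<le> \<bar>x - p\<bar>"
  then show "c \<le> dist_int x" unfolding dist_int_def by (intro cINF_greatest) (auto intro: Ints_0)
qed

lemma mem_Dioph_iff:
  "\<alpha> \<in> Dioph \<gamma> \<tau> \<longleftrightarrow> 0 < \<alpha> \<and> \<alpha> < 1 \<and>
     (\<forall>p q :: int. 0 < q \<longrightarrow> \<gamma> / of_int q powr (\<tau> + 1) \<le> \<bar>\<alpha> - of_int p / of_int q\<bar>)"
proof -
  have scale: "\<gamma> / of_int q powr \<tau> \<le> \<bar>of_int q * \<alpha> - of_int p\<bar> \<longleftrightarrow>
        \<gamma> / of_int q powr (\<tau> + 1) \<le> \<bar>\<alpha> - of_int p / of_int q\<bar>" if "0 < q" for p q :: int
  proof -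
    have "\<gamma> / of_int q powr \<tau> = of_int q * (\<gamma> / of_int q powr (\<tau> + 1))"
      using that by (simp add: powr_add)
    moreover have "\<bar>of_int q * \<alpha> - of_int p\<bar> = of_int q * \<bar>\<alpha> - of_int p / of_int q\<bar>"
      using that by (simp add: field_simps flip: abs_mult)
    ultimately show ?thesis using that by (metis mult_le_cancel_left_pos of_int_0_less_iff)
  qed
  have "(\<forall>q::nat. q \<ge> 1 \<longrightarrow> dist_int (real q * \<alpha>) \<ge> \<gamma> / real q powr \<tau>) \<longleftrightarrow>
      (\<forall>p q :: int. 0 < q \<longrightarrow> \<gamma> / of_int q powr \<tau> \<le> \<bar>of_int q * \<alpha> - of_int p\<bar>)"
    unfolding le_dist_int_iff Ints_def
    by (auto simp: Suc_le_eq; metis of_int_of_nat_eq of_nat_0_less_iff pos_int_cases)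
  then show ?thesis by (auto simp: Dioph_def scale)
qed

lemma Dioph_le_half:
  assumes "\<alpha> \<in> Dioph \<gamma> \<tau>" shows "\<gamma> \<le> 1 / 2"
proof -
  have "\<gamma> \<le> \<bar>\<alpha> - of_int (round \<alpha>)\<bar>"
    using assms unfolding mem_Dioph_iff by (metis div_by_1 of_int_1 powr_one_eq_one zero_less_one)
  then show ?thesis using of_int_round_abs_le[of \<alpha>] by linarith
qed

lemma Dioph_irrational: "\<alpha> \<in> Dioph \<gamma> \<tau> \<Longrightarrow> 0 < \<gamma> \<Longrightarrow> \<alpha> \<notin> \<rat>"
proof
  assume "\<alpha> \<in> Dioph \<gamma> \<tau>" "0 < \<gamma>" "\<alpha> \<in> \<rat>"
  then obtain p q :: int where "0 < q" "\<alpha> = of_int p / of_int q" by (auto elim: Rats_cases')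
  moreover from \<open>0 < q\<close> \<open>0 < \<gamma>\<close> have "0 < \<gamma> / of_int q powr (\<tau> + 1)" by simp
  ultimately show False using \<open>\<alpha> \<in> Dioph \<gamma> \<tau>\<close> by (auto simp: mem_Dioph_iff dest!: spec2[of _ p q])
qed

section \<open>Continued fraction convergents\<close>

lemma abs_diff_fractions_ge:
  fixes a b c d :: int
  assumes "0 < b" "0 < d" and ne: "of_int a / of_int b \<noteq> (of_int c / of_int d :: real)"
  shows "1 / (of_int b * of_int d) \<le> \<bar>of_int a / of_int b - of_int c / of_int d :: real\<bar>"
proof -
  have "a * d \<noteq> c * b"
    using ne assms(1,2) by (auto simp: field_simps simp flip: of_int_mult)
  then have "1 \<le> \<bar>real_of_int (a * d - c * b)\<bar>" by linarith
  moreover have "of_int a / of_int b - of_int c / of_int d = real_of_int (a * d - c * b) / (of_int b * of_int d)"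
    using assms(1,2) by (simp add: field_simps)
  ultimately show ?thesis using assms(1,2) by (simp add: abs_div divide_right_mono)
qed

lemma unimodular_coordinates:
  fixes a b c d p q :: int
  assumes "\<bar>c * b - a * d\<bar> = 1"
  obtains u v where "p = u * a + v * c" and "q = u * b + v * d"
proof
  define s where "s = c * b - a * d"
  have "s * s = 1" using assms by (metis s_def abs_mult_self_eq mult_1)
  have "(s * (q * c - p * d)) * a + (s * (p * b - q * a)) * c = s * (c * b - a * d) * p"
    by (simp add: algebra_simps)
  then show "p = (s * (q * c - p * d)) * a + (s * (p * b - q * a)) * c"
    using \<open>s * s = 1\<close> by (simp add: flip: s_def)
  have "(s * (q * c - p * d)) * b + (s * (p * b - q * a)) * d = s * (c * b - a * d) * q"
    by (simp add: algebra_simps)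
  then show "q = (s * (q * c - p * d)) * b + (s * (p * b - q * a)) * d"
    using \<open>s * s = 1\<close> by (simp add: flip: s_def)
qed

lemma fractions_eq_if_close:
  fixes a b c d :: int and x :: real
  assumes "0 < b" "0 < d"
    and "\<bar>x - of_int a / of_int b\<bar> < 1 / (2 * of_int b * of_int d)"
    and "\<bar>x - of_int c / of_int d\<bar> < 1 / (2 * of_int b * of_int d)"
  shows "of_int a / of_int b = (of_int c / of_int d :: real)"
proof (rule ccontr)
  define h where "h = 1 / (2 * real_of_int b * of_int d)"
  assume "of_int a / of_int b \<noteq> (of_int c / of_int d :: real)"
  then have "2 * h \<le> \<bar>of_int a / of_int b - of_int c / of_int d\<bar>"
    using abs_diff_fractions_ge[OF assms(1,2)] by (simp add: h_def)
  with assms(3,4) show False unfolding h_def[symmetric] by linarith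
qed

lemma small_positive_combination_signs:
  fixes b d q u v :: int
  assumes "1 \<le> b" "1 \<le> d" "q = u * b + v * d" "0 < q" "q < d"
  shows "u \<noteq> 0" and "u * v \<le> 0"
proof -
  show "u \<noteq> 0"
  proof
    assume "u = 0"
    with assms(2-4) have "1 \<le> v" by (simp add: zero_less_mult_iff)
    with \<open>u = 0\<close> assms(2,3,5) show False by (simp add: mult_le_cancel_right1)
  qed
  show "u * v \<le> 0"
  proof (rule ccontr)
    assume "\<not> u * v \<le> 0"
    then consider "0 < u" "0 < v" | "u < 0" "v < 0" by (metis linorder_not_le zero_less_mult_iff)
    then show False
    proof cases
      case 1
      then have "d \<le> v * d" "0 \<le> u * b" using assms(1,2) by simp_all
      with assms(3,5) show False by linarith
    next
      case 2
      then have "u * b < 0" "v * d < 0" using assms(1,2) by (simp_all add: mult_neg_pos)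
      with assms(3,4) show False by linarith
    qed
  qed
qed

lemma cf_p_0 [simp]: "cf_p \<alpha> 0 = 0"
  and cf_q_0 [simp]: "cf_q \<alpha> 0 = 1"
  and cf_p_1 [simp]: "cf_p \<alpha> (Suc 0) = 1"
  and cf_q_1 [simp]: "cf_q \<alpha> (Suc 0) = cf_a \<alpha> 1"
  and cf_p_Suc_Suc: "cf_p \<alpha> (Suc (Suc n)) = cf_a \<alpha> (Suc (Suc n)) * cf_p \<alpha> (Suc n) + cf_p \<alpha> n"
  and cf_q_Suc_Suc: "cf_q \<alpha> (Suc (Suc n)) = cf_a \<alpha> (Suc (Suc n)) * cf_q \<alpha> (Suc n) + cf_q \<alpha> n"
  by (simp_all add: cf_p_def cf_q_def)

lemma cf_det: "cf_p \<alpha> (Suc n) * cf_q \<alpha> n - cf_p \<alpha> n * cf_q \<alpha> (Suc n) = (-1) ^ n"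
  by (induction n) (simp_all add: cf_p_Suc_Suc cf_q_Suc_Suc algebra_simps)

lemma coprime_cf_p_cf_q: "coprime (cf_p \<alpha> n) (cf_q \<alpha> n)"
proof (rule coprimeI)
  fix c assume "c dvd cf_p \<alpha> n" "c dvd cf_q \<alpha> n"
  then have "c dvd (-1) ^ n" by (metis cf_det dvd_diff dvd_mult dvd_mult2)
  then show "is_unit c" using dvd_unit_imp_unit[of c "(-1) ^ n"] by simp
qed

lemma inverse_cf_rem: "1 / cf_rem \<alpha> n = of_int (cf_a \<alpha> (Suc n)) + cf_rem \<alpha> (Suc n)"
  by (simp add: cf_a_def)

lemma cf_rem_irrational: "\<alpha> \<notin> \<rat> \<Longrightarrow> cf_rem \<alpha> n \<notin> \<rat>"
proof (induction n)
  case (Suc n)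
  then have "1 / cf_rem \<alpha> n \<notin> \<rat>" by (metis Rats_divide Rats_1 div_by_1 divide_divide_eq_right mult_1)
  then show ?case by (metis Rats_add Rats_of_int diff_add_cancel cf_rem.simps(2))
qed simp

definition cf_err :: "real \<Rightarrow> nat \<Rightarrow> real" where
  "cf_err x n = of_int (cf_q x n) * x - of_int (cf_p x n)"

locale cf_irrational =
  fixes \<alpha> :: real
  assumes irrational: "\<alpha> \<notin> \<rat>" and pos: "0 < \<alpha>" and less_one: "\<alpha> < 1"
begin

lemma cf_rem_pos: "0 < cf_rem \<alpha> n" and cf_rem_less_one: "cf_rem \<alpha> n < 1"
proof -
  have "0 < cf_rem \<alpha> n \<and> cf_rem \<alpha> n < 1"
  proof (cases n)
    case (Suc k)
    have "cf_rem \<alpha> n \<noteq> 0" using cf_rem_irrational[OF irrational, of n] by auto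
    moreover have "0 \<le> cf_rem \<alpha> n" "cf_rem \<alpha> n < 1" using Suc by (simp_all, linarith+)
    ultimately show ?thesis by simp
  qed (simp add: pos less_one)
  then show "0 < cf_rem \<alpha> n" "cf_rem \<alpha> n < 1" by auto
qed

lemma cf_a_Suc_ge_one: "1 \<le> cf_a \<alpha> (Suc n)"
  using cf_rem_pos[of n] cf_rem_less_one[of n] by (simp add: cf_a_def le_floor_iff)

lemma cf_q_ge_one: "1 \<le> cf_q \<alpha> n"
  and cf_q_le_Suc: "cf_q \<alpha> n \<le> cf_q \<alpha> (Suc n)"
proof -
  have "1 \<le> cf_q \<alpha> n \<and> cf_q \<alpha> n \<le> cf_q \<alpha> (Suc n)"
  proof (induction n)
    case 0 then show ?case using cf_a_Suc_ge_one[of 0] by simp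
  next
    case (Suc n)
    have "cf_q \<alpha> (Suc n) \<le> cf_a \<alpha> (Suc (Suc n)) * cf_q \<alpha> (Suc n)"
      using mult_right_mono[OF cf_a_Suc_ge_one[of "Suc n"], of "cf_q \<alpha> (Suc n)"] Suc by simp
    then show ?case using Suc unfolding cf_q_Suc_Suc by (intro conjI; linarith)
  qed
  then show "1 \<le> cf_q \<alpha> n" "cf_q \<alpha> n \<le> cf_q \<alpha> (Suc n)" by auto
qed

lemma cf_q_mono: "m \<le> n \<Longrightarrow> cf_q \<alpha> m \<le> cf_q \<alpha> n"
  by (rule lift_Suc_mono_le[of "cf_q \<alpha>"]) (use cf_q_le_Suc in auto)

lemma cf_q_ge_index: "int n \<le> cf_q \<alpha> n"
proof -
  have "int n \<le> cf_q \<alpha> n \<and> int (Suc n) \<le> cf_q \<alpha> (Suc n)"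
  proof (induction n)
    case 0 then show ?case using cf_a_Suc_ge_one[of 0] by simp
  next
    case (Suc n)
    have "cf_q \<alpha> (Suc n) \<le> cf_a \<alpha> (Suc (Suc n)) * cf_q \<alpha> (Suc n)"
      using mult_right_mono[OF cf_a_Suc_ge_one[of "Suc n"], of "cf_q \<alpha> (Suc n)"] Suc by simp
    then show ?case using Suc cf_q_ge_one[of n] unfolding cf_q_Suc_Suc by (intro conjI; linarith)
  qed
  then show ?thesis ..
qed

lemma cf_value_via_remainder:
  "\<alpha> * (of_int (cf_q \<alpha> (Suc n)) + of_int (cf_q \<alpha> n) * cf_rem \<alpha> (Suc n))
     = of_int (cf_p \<alpha> (Suc n)) + of_int (cf_p \<alpha> n) * cf_rem \<alpha> (Suc n)"
proof (induction n)
  case 0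
  then show ?case using inverse_cf_rem[of \<alpha> 0] pos by (simp add: field_simps)
next
  case (Suc n)
  define a where "a = real_of_int (cf_a \<alpha> (Suc (Suc n)))"
  define s where "s = cf_rem \<alpha> (Suc (Suc n))"
  have "0 < a + s"
    using cf_a_Suc_ge_one[of "Suc n"] cf_rem_pos[of "Suc (Suc n)"] by (simp add: a_def s_def)
  moreover have "cf_rem \<alpha> (Suc n) = 1 / (a + s)"
    using inverse_cf_rem[of \<alpha> "Suc n"] cf_rem_pos[of "Suc n"] \<open>0 < a + s\<close> unfolding a_def s_def
    by (simp add: field_simps del: cf_rem.simps)
  ultimately show ?case
    using Suc.IH unfolding cf_p_Suc_Suc cf_q_Suc_Suc of_int_add of_int_mult
    by (simp only: flip: a_def s_def) (simp add: field_simps)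
qed

lemma cf_err_mult:
  "cf_err \<alpha> n * (of_int (cf_q \<alpha> (Suc n)) + of_int (cf_q \<alpha> n) * cf_rem \<alpha> (Suc n)) = (-1) ^ n"
proof -
  define D where "D = of_int (cf_q \<alpha> (Suc n)) + of_int (cf_q \<alpha> n) * cf_rem \<alpha> (Suc n)"
  have "cf_err \<alpha> n * D = of_int (cf_q \<alpha> n) * (\<alpha> * D) - of_int (cf_p \<alpha> n) * D"
    by (simp add: cf_err_def algebra_simps)
  also have "\<dots> = of_int (cf_p \<alpha> (Suc n) * cf_q \<alpha> n - cf_p \<alpha> n * cf_q \<alpha> (Suc n))"
    unfolding D_def cf_value_via_remainder by (simp add: algebra_simps)
  finally show ?thesis by (simp add: cf_det D_def)
qed

lemma cf_err_sign: "0 < (-1) ^ n * cf_err \<alpha> n"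
proof -
  have "0 < of_int (cf_q \<alpha> (Suc n)) + of_int (cf_q \<alpha> n) * cf_rem \<alpha> (Suc n)"
    using cf_q_ge_one[of "Suc n"] cf_q_ge_one[of n] cf_rem_pos[of "Suc n"] by (simp add: add_pos_pos)
  moreover have "(-1) ^ n * cf_err \<alpha> n * (of_int (cf_q \<alpha> (Suc n)) + of_int (cf_q \<alpha> n) * cf_rem \<alpha> (Suc n)) = 1"
    by (simp add: cf_err_mult mult.assoc flip: power_mult_distrib del: cf_rem.simps)
  ultimately show ?thesis by (metis zero_less_mult_pos2 zero_less_one)
qed

lemma cf_err_abs_less: "\<bar>cf_err \<alpha> n\<bar> < 1 / of_int (cf_q \<alpha> (Suc n))"
proof -
  define D where "D = of_int (cf_q \<alpha> (Suc n)) + of_int (cf_q \<alpha> n) * cf_rem \<alpha> (Suc n)"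
  have "of_int (cf_q \<alpha> (Suc n)) < D"
    using cf_q_ge_one[of n] cf_rem_pos[of "Suc n"] by (simp add: D_def)
  moreover have "1 \<le> real_of_int (cf_q \<alpha> (Suc n))" using cf_q_ge_one[of "Suc n"] by simp
  moreover have one: "\<bar>cf_err \<alpha> n\<bar> * \<bar>D\<bar> = 1"
    using arg_cong[OF cf_err_mult[of n], of abs] unfolding D_def abs_mult by (simp add: power_abs)
  moreover from one have "0 < \<bar>cf_err \<alpha> n\<bar>" by (cases "cf_err \<alpha> n = 0") auto
  ultimately have "\<bar>cf_err \<alpha> n\<bar> * of_int (cf_q \<alpha> (Suc n)) < \<bar>cf_err \<alpha> n\<bar> * \<bar>D\<bar>"
    by (intro mult_strict_left_mono) auto
  then have "\<bar>cf_err \<alpha> n\<bar> * of_int (cf_q \<alpha> (Suc n)) < 1" using one by simp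
  then show ?thesis using \<open>1 \<le> real_of_int (cf_q \<alpha> (Suc n))\<close> by (simp add: field_simps)
qed

lemma cf_err_opposite_signs: "cf_err \<alpha> n * cf_err \<alpha> (Suc n) < 0"
proof -
  have "((-1) ^ n * cf_err \<alpha> n) * ((-1) ^ n * cf_err \<alpha> (Suc n)) < 0"
    using mult_pos_neg[OF cf_err_sign[of n], of "(-1) ^ n * cf_err \<alpha> (Suc n)"] cf_err_sign[of "Suc n"]
    by simp
  then show ?thesis by (simp add: algebra_simps flip: power_mult_distrib)
qed

lemma cf_best_approximation:
  fixes p q :: int
  assumes "0 < q" and "q < cf_q \<alpha> (Suc n)"
  shows "\<bar>cf_err \<alpha> n\<bar> \<le> \<bar>of_int q * \<alpha> - of_int p\<bar>"
proof -
  have "\<bar>cf_p \<alpha> (Suc n) * cf_q \<alpha> n - cf_p \<alpha> n * cf_q \<alpha> (Suc n)\<bar> = 1"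
    by (simp add: cf_det power_abs)
  then obtain u v where p: "p = u * cf_p \<alpha> n + v * cf_p \<alpha> (Suc n)"
    and q: "q = u * cf_q \<alpha> n + v * cf_q \<alpha> (Suc n)"
    by (rule unimodular_coordinates)
  have err: "of_int q * \<alpha> - of_int p = of_int u * cf_err \<alpha> n + of_int v * cf_err \<alpha> (Suc n)"
    by (simp add: p q cf_err_def algebra_simps)
  note signs = small_positive_combination_signs[OF cf_q_ge_one[of n] cf_q_ge_one[of "Suc n"] q assms]
  \<comment> \<open>u, v have opposite signs and consecutive errors alternate in sign, so the summands of err agree in sign\<close>
  have "0 \<le> (of_int u * cf_err \<alpha> n) * (of_int v * cf_err \<alpha> (Suc n))"
  proof -
    have "real_of_int (u * v) \<le> 0" using signs(2) by linarith
    then have "0 \<le> real_of_int (u * v) * (cf_err \<alpha> n * cf_err \<alpha> (Suc n))"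
      using cf_err_opposite_signs[of n] by (intro mult_nonpos_nonpos) auto
    then show ?thesis by (simp add: algebra_simps)
  qed
  then have "\<bar>of_int u * cf_err \<alpha> n\<bar> \<le> \<bar>of_int q * \<alpha> - of_int p\<bar>"
    unfolding err by (auto simp: zero_le_mult_iff)
  moreover have "\<bar>cf_err \<alpha> n\<bar> \<le> \<bar>of_int u * cf_err \<alpha> n\<bar>"
  proof -
    have "1 \<le> \<bar>real_of_int u\<bar>" using signs(1) by linarith
    then show ?thesis using mult_right_mono[of 1 "\<bar>real_of_int u\<bar>" "\<bar>cf_err \<alpha> n\<bar>"] by (simp add: abs_mult)
  qed
  ultimately show ?thesis by linarith
qed

lemma cf_convergent_eq: "\<alpha> - of_int (cf_p \<alpha> n) / of_int (cf_q \<alpha> n) = cf_err \<alpha> n / of_int (cf_q \<alpha> n)"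
  using cf_q_ge_one[of n] by (simp add: cf_err_def field_simps)

lemma cf_even_convergent_less:
  assumes "even n" shows "of_int (cf_p \<alpha> n) / of_int (cf_q \<alpha> n) < \<alpha>"
proof -
  have "0 < cf_err \<alpha> n / of_int (cf_q \<alpha> n)" using cf_err_sign[of n] cf_q_ge_one[of n] assms by simp
  then show ?thesis using cf_convergent_eq[of n] by linarith
qed

lemma cf_dist_convergent_less:
  "\<bar>\<alpha> - of_int (cf_p \<alpha> n) / of_int (cf_q \<alpha> n)\<bar> < 1 / of_int (cf_q \<alpha> n) ^ 2"
proof -
  have "\<bar>cf_err \<alpha> n\<bar> < 1 / of_int (cf_q \<alpha> (Suc n))" by (rule cf_err_abs_less)
  also have "\<dots> \<le> 1 / of_int (cf_q \<alpha> n)"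
    using cf_q_le_Suc[of n] cf_q_ge_one[of n] by (intro divide_left_mono) auto
  finally have "\<bar>cf_err \<alpha> n\<bar> / of_int (cf_q \<alpha> n) < 1 / of_int (cf_q \<alpha> n) / of_int (cf_q \<alpha> n)"
    using cf_q_ge_one[of n] by (intro divide_strict_right_mono) auto
  then show ?thesis
    using cf_q_ge_one[of n] by (simp add: cf_convergent_eq abs_div power2_eq_square)
qed

lemma cf_q_bracket:
  fixes q :: int
  assumes "1 \<le> q"
  obtains n where "cf_q \<alpha> n \<le> q" and "q < cf_q \<alpha> (Suc n)"
proof -
  define j where "j = (LEAST j. q < cf_q \<alpha> j)"
  have "q < cf_q \<alpha> (Suc (nat q))" using cf_q_ge_index[of "Suc (nat q)"] assms by linarith
  then have "q < cf_q \<alpha> j" unfolding j_def by (rule LeastI)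
  moreover from this assms have "j \<noteq> 0" by (intro notI) simp
  then obtain n where "j = Suc n" using not0_implies_Suc by blast
  moreover have "\<not> q < cf_q \<alpha> n" using not_less_Least[of n "\<lambda>j. q < cf_q \<alpha> j"] \<open>j = Suc n\<close> j_def by simp
  ultimately show ?thesis using that[of n] by (simp add: not_less)
qed

lemma cf_legendre:
  fixes p q :: int
  assumes q: "0 < q" and above: "0 < \<alpha> - of_int p / of_int q"
    and close: "\<alpha> - of_int p / of_int q < 1 / (2 * of_int q ^ 2)"
  obtains n where "even n" and "cf_q \<alpha> n \<le> q"
    and "of_int p / of_int q = (of_int (cf_p \<alpha> n) / of_int (cf_q \<alpha> n) :: real)"
proof -
  from q have "1 \<le> q" by simp
  then obtain n where "cf_q \<alpha> n \<le> q" and "q < cf_q \<alpha> (Suc n)" by (rule cf_q_bracket)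
  define x where "x = real_of_int p / of_int q"
  define Q where "Q = real_of_int (cf_q \<alpha> n)"
  have "1 \<le> Q" "Q \<le> of_int q" using cf_q_ge_one[of n] \<open>cf_q \<alpha> n \<le> q\<close> by (simp_all add: Q_def)
  have "of_int q * \<alpha> - of_int p = of_int q * (\<alpha> - x)" using q by (simp add: x_def field_simps)
  then have "\<bar>cf_err \<alpha> n\<bar> \<le> of_int q * (\<alpha> - x)"
    using cf_best_approximation[OF q \<open>q < cf_q \<alpha> (Suc n)\<close>, of p] q above by (simp add: abs_mult x_def)
  also have "\<dots> < of_int q * (1 / (2 * of_int q ^ 2))"
    using q close by (intro mult_strict_left_mono) (simp_all add: x_def)
  also have "\<dots> = 1 / (2 * of_int q)" using q by (simp add: power2_eq_square)
  finally have "\<bar>cf_err \<alpha> n\<bar> / Q < 1 / (2 * of_int q) / Q"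
    using \<open>1 \<le> Q\<close> by (intro divide_strict_right_mono) auto
  then have "\<bar>\<alpha> - of_int (cf_p \<alpha> n) / Q\<bar> < 1 / (2 * of_int q * Q)"
    using \<open>1 \<le> Q\<close> cf_convergent_eq[of n] by (simp add: Q_def abs_div)
  moreover have "\<bar>\<alpha> - x\<bar> < 1 / (2 * of_int q * Q)"
  proof -
    have "1 / (2 * of_int q ^ 2) \<le> 1 / (2 * of_int q * Q)"
      using q \<open>1 \<le> Q\<close> \<open>Q \<le> of_int q\<close> by (intro divide_left_mono) (auto simp: power2_eq_square)
    then show ?thesis using close above by (simp add: x_def)
  qed
  ultimately have "x = of_int (cf_p \<alpha> n) / Q"
    using fractions_eq_if_close[OF q, of "cf_q \<alpha> n" \<alpha> p "cf_p \<alpha> n"] cf_q_ge_one[of n]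
    by (simp add: x_def Q_def)
  moreover have "even n"
  proof (rule ccontr)
    assume "odd n"
    then have "cf_err \<alpha> n < 0" using cf_err_sign[of n] by simp
    moreover have "0 < cf_err \<alpha> n / Q"
      using \<open>x = of_int (cf_p \<alpha> n) / Q\<close> above cf_convergent_eq[of n] by (simp add: x_def Q_def)
    ultimately show False using \<open>1 \<le> Q\<close> by (simp add: zero_less_divide_iff)
  qed
  ultimately show ?thesis using that \<open>cf_q \<alpha> n \<le> q\<close> by (simp add: x_def Q_def)
qed

lemma cf_q_le_den_between:
  fixes p q :: int
  assumes q: "0 < q"
    and between: "of_int (cf_p \<alpha> m) / of_int (cf_q \<alpha> m) \<le> (of_int p / of_int q :: real)"
      "of_int p / of_int q < \<alpha>"
  shows "cf_q \<alpha> m \<le> q"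
proof (cases "of_int (cf_p \<alpha> m) / of_int (cf_q \<alpha> m) = (of_int p / of_int q :: real)")
  case True
  then have "real_of_int (cf_p \<alpha> m * q) = of_int (p * cf_q \<alpha> m)"
    using q cf_q_ge_one[of m] by (simp add: frac_eq_eq)
  then have "cf_p \<alpha> m * q = p * cf_q \<alpha> m" by (rule of_int_eq_iff[THEN iffD1])
  then have "cf_q \<alpha> m dvd cf_p \<alpha> m * q" by simp
  then have "cf_q \<alpha> m dvd q" using coprime_cf_p_cf_q coprime_dvd_mult_right_iff coprime_commute by metis
  then show ?thesis using q by (simp add: zdvd_imp_le)
next
  case False
  define Q where "Q = real_of_int (cf_q \<alpha> m)"
  have Q: "1 \<le> Q" using cf_q_ge_one[of m] by (simp add: Q_def)
  have "1 / (of_int q * Q) \<le> of_int p / of_int q - of_int (cf_p \<alpha> m) / Q"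
    using abs_diff_fractions_ge[OF q, of "cf_q \<alpha> m" p "cf_p \<alpha> m"] False between cf_q_ge_one[of m]
    by (simp add: Q_def)
  also have "\<dots> < \<alpha> - of_int (cf_p \<alpha> m) / Q" using between by simp
  also have "\<dots> = cf_err \<alpha> m / Q" using Q by (simp add: Q_def cf_err_def field_simps)
  also have "\<dots> \<le> \<bar>cf_err \<alpha> m\<bar> / Q" using Q by (simp add: divide_right_mono)
  also have "\<dots> < 1 / of_int (cf_q \<alpha> (Suc m)) / Q"
    using divide_strict_right_mono[OF cf_err_abs_less[of m], of Q] Q by simp
  finally have "1 / (of_int q * Q) < 1 / (of_int (cf_q \<alpha> (Suc m)) * Q)" by simp
  then have "of_int (cf_q \<alpha> (Suc m)) * Q < of_int q * Q"
    using q Q cf_q_ge_one[of "Suc m"] by (simp add: inverse_less_iff_less flip: inverse_eq_divide)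
  then have "cf_q \<alpha> (Suc m) < q" using Q by simp
  then show ?thesis using cf_q_le_Suc[of m] by simp
qed

lemma filterlim_cf_q_at_top:
  "filterlim (\<lambda>n. real_of_int (cf_q \<alpha> n)) at_top sequentially"
proof (rule filterlim_at_top_mono[OF filterlim_real_sequentially], intro always_eventually allI)
  fix n show "real n \<le> real_of_int (cf_q \<alpha> n)" using cf_q_ge_index[of n] by linarith
qed

end

lemma cf_irrational_Dioph: "\<alpha> \<in> Dioph \<gamma> \<tau> \<Longrightarrow> 0 < \<gamma> \<Longrightarrow> cf_irrational \<alpha>"
  by unfold_locales (auto simp: mem_Dioph_iff Dioph_irrational)

section \<open>Neighbourhoods of fractions with large denominators\<close>

lemma inverse_square_tail:
  fixes N :: nat
  assumes "1 \<le> N"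
  shows "summable (\<lambda>n. 1 / real (n + N + 1) ^ 2)" and "(\<Sum>n. 1 / real (n + N + 1) ^ 2) \<le> 1 / real N"
proof -
  have "(\<lambda>n. 1 / real (n + N)) \<longlonglongrightarrow> 0"
    using LIMSEQ_ignore_initial_segment[OF lim_1_over_n, of N] by simp
  from telescope_sums'[OF this] have tele: "(\<lambda>n. 1 / real (n + N) - 1 / real (Suc n + N)) sums (1 / real N)"
    by simp
  have le: "1 / real (n + N + 1) ^ 2 \<le> 1 / real (n + N) - 1 / real (Suc n + N)" for n
  proof -
    have "0 < real (n + N)" using assms by simp
    then have "1 / real (n + N) - 1 / real (Suc n + N) = 1 / (real (n + N) * real (n + N + 1))"
      by (simp add: field_simps)
    also have "1 / real (n + N + 1) ^ 2 \<le> \<dots>"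
      using \<open>0 < real (n + N)\<close> by (intro divide_left_mono) (auto simp: power2_eq_square)
    finally show ?thesis .
  qed
  show "summable (\<lambda>n. 1 / real (n + N + 1) ^ 2)"
    using le by (intro summable_comparison_test'[OF sums_summable[OF tele], of 0]) auto
  then show "(\<Sum>n. 1 / real (n + N + 1) ^ 2) \<le> 1 / real N"
    using suminf_le[OF le _ sums_summable[OF tele]] sums_unique[OF tele] by simp
qed

lemma emeasure_near_fractions_le:
  fixes a b r :: real and q :: nat
  assumes "a \<le> b" "0 < q" "0 \<le> r" "r \<le> 1 / q"
  shows "emeasure lborel {y \<in> {a..b}. \<exists>p::int. \<bar>y - of_int p / real q\<bar> < r}
           \<le> ennreal ((real q * (b - a) + 3) * (2 * r))"
proof -
  define I where "I = {\<lceil>real q * a\<rceil> - 1 .. \<lfloor>real q * b\<rfloor> + 1}"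
  define J where "J = (\<lambda>p::int. {of_int p / real q - r <..< of_int p / real q + r})"
  have "{y \<in> {a..b}. \<exists>p::int. \<bar>y - of_int p / real q\<bar> < r} \<subseteq> (\<Union>p\<in>I. J p)"
  proof safe
    fix y p assume y: "y \<in> {a..b}" and close: "\<bar>y - of_int p / real q\<bar> < r"
    have "\<bar>real q * y - of_int p\<bar> = real q * \<bar>y - of_int p / real q\<bar>"
      using assms(2) by (simp add: field_simps flip: abs_mult)
    also have "\<dots> < 1" using close assms(2,4) by (simp add: field_simps)
    finally have "\<bar>real q * y - of_int p\<bar> < 1" .
    moreover have "real q * a \<le> real q * y" "real q * y \<le> real q * b" using y by (auto intro: mult_left_mono)
    ultimately have "p \<in> I" unfolding I_def by (simp add: ceiling_le_iff le_floor_iff) linarith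
    moreover have "y \<in> J p" using close by (auto simp: J_def abs_less_iff)
    ultimately show "y \<in> (\<Union>p\<in>I. J p)" by blast
  qed
  then have "emeasure lborel {y \<in> {a..b}. \<exists>p::int. \<bar>y - of_int p / real q\<bar> < r} \<le> emeasure lborel (\<Union>p\<in>I. J p)"
    by (rule emeasure_mono) (simp add: J_def)
  also have "\<dots> \<le> (\<Sum>p\<in>I. emeasure lborel (J p))"
    by (rule emeasure_subadditive_finite) (auto simp: I_def J_def)
  also have "\<dots> = ennreal (real (card I) * (2 * r))"
    using assms(3) by (simp add: J_def sum_ennreal[symmetric] ennreal_mult' ennreal_of_nat_eq_real_of_nat)
  also have "\<dots> \<le> ennreal ((real q * (b - a) + 3) * (2 * r))"
  proof -
    have "real q * a \<le> real q * b" using assms(1) by (simp add: mult_left_mono)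
    moreover have "of_int \<lceil>real q * a\<rceil> - 1 < real q * a" "real q * b < of_int \<lfloor>real q * b\<rfloor> + 1"
      by linarith+
    ultimately have "0 \<le> \<lfloor>real q * b\<rfloor> - \<lceil>real q * a\<rceil> + 3" by linarith
    then have "real (card I) = of_int (\<lfloor>real q * b\<rfloor> - \<lceil>real q * a\<rceil> + 3)"
      by (simp add: I_def algebra_simps)
    then have "real (card I) \<le> real q * (b - a) + 3"
      using of_int_floor_le[of "real q * b"] le_of_int_ceiling[of "real q * a"] right_diff_distrib[of "real q" b a]
      by linarith
    then show ?thesis using assms(3) by (intro ennreal_leI mult_right_mono) auto
  qed
  finally show ?thesis .
qed

lemma powr_ge_square_mult:
  fixes x N s :: real
  assumes "1 \<le> N" "N \<le> x" "0 \<le> s"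
  shows "x ^ 2 * N powr s \<le> x powr (s + 2)"
proof -
  have "x powr (s + 2) = x powr s * x powr 2" by (rule powr_add)
  also have "x powr 2 = x ^ 2" using assms by (intro powr_numeral) auto
  finally have "x powr (s + 2) = x powr s * x ^ 2" .
  moreover have "N powr s \<le> x powr s" using assms by (intro powr_mono2) auto
  ultimately show ?thesis by (simp add: mult.commute mult_right_mono)
qed

lemma emeasure_near_fractions_le_inverse_square:
  fixes a b \<gamma> \<tau> :: real and N q :: nat
  assumes "a \<le> b" "0 < \<gamma>" "\<gamma> \<le> 1" "2 \<le> \<tau>" "1 \<le> N" "N \<le> q"
  shows "emeasure lborel {y \<in> {a..b}. \<exists>p::int. \<bar>y - of_int p / real q\<bar> < \<gamma> / real q powr (\<tau> + 1)}
    \<le> ennreal ((2 * \<gamma> * (b - a) / real N powr (\<tau> - 2) + 6 * \<gamma> / real N powr (\<tau> - 1)) / real q ^ 2)"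
proof -
  define x where "x = real q"
  have "1 \<le> real N" "real N \<le> x" using assms(5,6) by (simp_all add: x_def)
  have "x \<le> x powr (\<tau> + 1)"
    using powr_mono[of 1 "\<tau> + 1" x] \<open>1 \<le> real N\<close> \<open>real N \<le> x\<close> assms(4) by simp
  then have "\<gamma> / x powr (\<tau> + 1) \<le> 1 / x"
    using assms(2,3) \<open>1 \<le> real N\<close> \<open>real N \<le> x\<close> by (intro frac_le) auto
  then have "emeasure lborel {y \<in> {a..b}. \<exists>p::int. \<bar>y - of_int p / real q\<bar> < \<gamma> / real q powr (\<tau> + 1)}
      \<le> ennreal ((x * (b - a) + 3) * (2 * (\<gamma> / x powr (\<tau> + 1))))"
    unfolding x_def using assms(1,2,5,6) by (intro emeasure_near_fractions_le) auto
  also have "(x * (b - a) + 3) * (2 * (\<gamma> / x powr (\<tau> + 1)))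
      = 2 * \<gamma> * (b - a) / x powr \<tau> + 6 * \<gamma> / x powr (\<tau> + 1)"
  proof -
    have "x powr (\<tau> + 1) = x powr \<tau> * x" using \<open>1 \<le> real N\<close> \<open>real N \<le> x\<close> by (simp add: powr_add)
    then show ?thesis using \<open>1 \<le> real N\<close> \<open>real N \<le> x\<close> by (simp add: field_simps)
  qed
  also have "\<dots> \<le> 2 * \<gamma> * (b - a) / (x ^ 2 * real N powr (\<tau> - 2)) + 6 * \<gamma> / (x ^ 2 * real N powr (\<tau> - 1))"
  proof -
    have "x ^ 2 * real N powr (\<tau> - 2) \<le> x powr \<tau>"
      using powr_ge_square_mult[OF \<open>1 \<le> real N\<close> \<open>real N \<le> x\<close>, of "\<tau> - 2"] assms(4) by simp
    moreover have "x ^ 2 * real N powr (\<tau> - 1) \<le> x powr (\<tau> + 1)"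
      using powr_ge_square_mult[OF \<open>1 \<le> real N\<close> \<open>real N \<le> x\<close>, of "\<tau> - 1"] assms(4)
      by (simp add: add.commute)
    ultimately show ?thesis
      using assms(1,2) \<open>1 \<le> real N\<close> \<open>real N \<le> x\<close> by (intro add_mono divide_left_mono) auto
  qed
  also have "\<dots> = (2 * \<gamma> * (b - a) / real N powr (\<tau> - 2) + 6 * \<gamma> / real N powr (\<tau> - 1)) / x ^ 2"
    using \<open>1 \<le> real N\<close> \<open>real N \<le> x\<close> by (simp add: field_simps)
  finally show ?thesis by (simp add: x_def ennreal_leI)
qed

lemma exists_far_from_large_denominator_fractions:
  fixes a b \<gamma> \<tau> :: real and N :: nat
  assumes "a \<le> b" "0 < \<gamma>" "\<gamma> \<le> 1" "2 \<le> \<tau>" "1 \<le> N"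
    and small: "2 * \<gamma> * (b - a) / real N powr (\<tau> - 1) + 6 * \<gamma> / real N powr \<tau> < b - a"
  shows "\<exists>y\<in>{a..b}. \<forall>p q :: int. real N < of_int q \<longrightarrow>
           \<gamma> / of_int q powr (\<tau> + 1) \<le> \<bar>y - of_int p / of_int q\<bar>"
proof (rule ccontr)
  assume none: "\<not> ?thesis"
  define W where "W n = {y \<in> {a..b}. \<exists>p::int.
    \<bar>y - of_int p / real (n + N + 1)\<bar> < \<gamma> / real (n + N + 1) powr (\<tau> + 1)}" for n
  define C where "C = 2 * \<gamma> * (b - a) / real N powr (\<tau> - 2) + 6 * \<gamma> / real N powr (\<tau> - 1)"
  have "0 \<le> C" using assms(1,2) by (simp add: C_def)
  have W_sets: "W n \<in> sets lborel" for n unfolding W_def by measurable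
  have "{a..b} \<subseteq> (\<Union>n. W n)"
  proof
    fix y assume "y \<in> {a..b}"
    with none have "\<not> (\<forall>p q :: int. real N < of_int q \<longrightarrow>
        \<gamma> / of_int q powr (\<tau> + 1) \<le> \<bar>y - of_int p / of_int q\<bar>)" by blast
    then obtain p q :: int where "real N < of_int q"
      and close: "\<bar>y - of_int p / of_int q\<bar> < \<gamma> / of_int q powr (\<tau> + 1)"
      by (auto simp: not_le)
    then have q: "of_int q = real (nat q - N - 1 + N + 1)" by linarith
    have "y \<in> W (nat q - N - 1)"
      using close \<open>y \<in> {a..b}\<close> unfolding W_def q[symmetric] by auto
    then show "y \<in> (\<Union>n. W n)" by blast
  qed
  then have "emeasure lborel {a..b} \<le> emeasure lborel (\<Union>n. W n)"
    using W_sets by (intro emeasure_mono) auto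
  also have "\<dots> \<le> (\<Sum>n. emeasure lborel (W n))"
    using W_sets by (intro emeasure_subadditive_countably) auto
  also have "\<dots> \<le> (\<Sum>n. ennreal (C * (1 / real (n + N + 1) ^ 2)))"
  proof (intro suminf_le allI summableI)
    fix n
    show "emeasure lborel (W n) \<le> ennreal (C * (1 / real (n + N + 1) ^ 2))"
      using emeasure_near_fractions_le_inverse_square[OF assms(1-5), of "n + N + 1"]
      by (simp add: W_def C_def)
  qed
  also have "\<dots> = ennreal (\<Sum>n. C * (1 / real (n + N + 1) ^ 2))"
    using \<open>0 \<le> C\<close> summable_mult[OF inverse_square_tail(1)[OF assms(5)]] by (intro suminf_ennreal2) auto
  also have "\<dots> \<le> ennreal (C / real N)"
    using mult_left_mono[OF inverse_square_tail(2)[OF assms(5)] \<open>0 \<le> C\<close>]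
    unfolding suminf_mult[OF inverse_square_tail(1)[OF assms(5)]] by (intro ennreal_leI) simp
  finally have "b - a \<le> C / real N" using assms(1) \<open>0 \<le> C\<close> by simp
  moreover have "C / real N = 2 * \<gamma> * (b - a) / real N powr (\<tau> - 1) + 6 * \<gamma> / real N powr \<tau>"
  proof -
    have "real N powr (\<tau> - 1) = real N powr (\<tau> - 2) * real N" "real N powr \<tau> = real N powr (\<tau> - 1) * real N"
      using assms(5) powr_add[of "real N" "\<tau> - 2" 1] powr_add[of "real N" "\<tau> - 1" 1] by simp_all
    then show ?thesis by (simp add: C_def add_divide_distrib)
  qed
  ultimately show False using small by simp
qed

section \<open>Diophantine points below an even convergent\<close>

lemma close_below_imp_powr_den_less:
  fixes \<gamma> \<tau> x Q B y r :: real
  assumes "\<gamma> \<le> 1 / 2" "1 \<le> x" "x \<le> Q"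
    and gap: "1 / (x * Q) \<le> B - r" and y: "B - 1 / (2 * Q ^ 2) \<le> y"
    and close: "y - r < \<gamma> / x powr (\<tau> + 1)"
  shows "x powr \<tau> < Q"
proof -
  define P where "P = x powr \<tau>"
  define h where "h = 1 / (2 * x * Q)"
  have "0 < P" "0 < Q" using assms(2,3) by (simp_all add: P_def)
  have "1 / (x * Q) = 2 * h" by (simp add: h_def)
  moreover have "1 / (2 * Q ^ 2) \<le> h"
    unfolding h_def using assms(2,3) by (intro divide_left_mono) (auto simp: power2_eq_square)
  ultimately have "h < \<gamma> / x powr (\<tau> + 1)" using gap y close by linarith
  also have "\<gamma> / x powr (\<tau> + 1) = \<gamma> / (P * x)" using assms(2) by (simp add: P_def powr_add)
  finally have "P < 2 * \<gamma> * Q"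
    using assms(2) \<open>0 < Q\<close> \<open>0 < P\<close> by (simp add: h_def field_simps)
  also have "\<dots> \<le> Q" using assms(1) \<open>0 < Q\<close> by simp
  finally show ?thesis by (simp add: P_def)
qed

lemma close_below_imp_legendre_bound:
  fixes \<gamma> \<tau> x Q \<alpha> B y r :: real
  assumes "0 < \<gamma>" "\<gamma> \<le> 1 / 2" "3 \<le> \<tau>" "2 \<le> x" "x powr \<tau> < Q"
    and "\<alpha> - B < 1 / Q ^ 2" "B - 1 / (2 * Q ^ 2) \<le> y" "y - r < \<gamma> / x powr (\<tau> + 1)"
  shows "\<alpha> - r < 1 / (2 * x ^ 2)"
proof -
  define w where "w = 1 / (32 * x ^ 2)"
  define c where "c = 1 / Q ^ 2"
  have "4 \<le> x ^ 2" using mult_mono[OF assms(4) assms(4)] assms(4) by (simp add: power2_eq_square)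
  have "c \<le> 2 * w"
  proof -
    have "x ^ 3 < Q" using powr_mono[of 3 \<tau> x] assms(3-5) by (simp add: powr_realpow)
    moreover have "4 * x \<le> x ^ 3"
      using mult_right_mono[OF \<open>4 \<le> x ^ 2\<close>, of x] assms(4) by (simp add: power3_eq_cube power2_eq_square)
    moreover have "0 < x ^ 3" using assms(4) by simp
    ultimately have "(4 * x) ^ 2 \<le> Q ^ 2" "0 < Q" using assms(4) by (intro power_mono, auto)
    then have "1 / Q ^ 2 \<le> 1 / (16 * x ^ 2)"
      using assms(4) by (intro divide_left_mono) (auto simp: power_mult_distrib)
    then show ?thesis by (simp add: w_def c_def)
  qed
  moreover have "\<gamma> / x powr (\<tau> + 1) \<le> 4 * w"
  proof -
    have "4 * x ^ 2 \<le> x ^ 4" using mult_right_mono[OF \<open>4 \<le> x ^ 2\<close>, of "x ^ 2"] by (simp flip: power_add)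
    also have "x ^ 4 \<le> x powr (\<tau> + 1)"
      using powr_mono[of 4 "\<tau> + 1" x] assms(3,4) by (simp add: powr_realpow)
    finally have "\<gamma> / x powr (\<tau> + 1) \<le> \<gamma> / (4 * x ^ 2)"
      using assms(1,4) by (intro divide_left_mono) auto
    also have "\<dots> \<le> 4 * w" using assms(2,4) by (simp add: w_def field_simps)
    finally show ?thesis .
  qed
  moreover have "\<alpha> - r < c + c / 2 + \<gamma> / x powr (\<tau> + 1)"
    using assms(6-8) by (simp add: c_def)
  moreover have "0 < w" using assms(4) by (simp add: w_def)
  ultimately have "\<alpha> - r < 16 * w" by linarith
  then show ?thesis by (simp add: w_def)
qed

lemma exists_convergent_above_close_fraction:
  fixes \<alpha> \<gamma> \<tau> y :: real and m :: nat and p q :: int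
  defines "Q \<equiv> real_of_int (cf_q \<alpha> m)" and "B \<equiv> real_of_int (cf_p \<alpha> m) / of_int (cf_q \<alpha> m)"
  assumes D: "\<alpha> \<in> Dioph \<gamma> \<tau>" and "0 < \<gamma>" "3 \<le> \<tau>" "even m" "0 < m"
    and y: "B - 1 / (2 * Q ^ 2) \<le> y"
    and q: "0 < q" "of_int q \<le> Q"
    and below: "of_int p / of_int q < B"
    and close: "\<bar>y - of_int p / of_int q\<bar> < \<gamma> / of_int q powr (\<tau> + 1)"
  obtains n where "even n" "n < m" "cf_q \<alpha> n \<le> q"
    "of_int p / of_int q \<le> (of_int (cf_p \<alpha> n) / of_int (cf_q \<alpha> n) :: real)"
proof -
  interpret cf_irrational \<alpha> by (rule cf_irrational_Dioph[OF D \<open>0 < \<gamma>\<close>])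
  define x where "x = real_of_int q"
  define r where "r = of_int p / x"
  have "\<gamma> \<le> 1 / 2" by (rule Dioph_le_half[OF D])
  have "1 \<le> x" "x \<le> Q" using q by (simp_all add: x_def)
  have "B < \<alpha>" "\<alpha> - B < 1 / Q ^ 2"
    using cf_even_convergent_less[OF \<open>even m\<close>] cf_dist_convergent_less[of m] by (simp_all add: B_def Q_def)
  have close': "y - r < \<gamma> / x powr (\<tau> + 1)" using close by (simp add: r_def x_def)
  have "1 / (x * Q) \<le> B - r"
    using abs_diff_fractions_ge[OF q(1), of "cf_q \<alpha> m" p "cf_p \<alpha> m"] below cf_q_ge_one[of m]
    by (simp add: B_def Q_def r_def x_def)
  from close_below_imp_powr_den_less[OF \<open>\<gamma> \<le> 1 / 2\<close> \<open>1 \<le> x\<close> \<open>x \<le> Q\<close> this y close']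
  have "x powr \<tau> < Q" .
  show thesis
  proof (cases "q = 1")
    case True
    then have "r = of_int p" by (simp add: r_def x_def)
    with below \<open>B < \<alpha>\<close> less_one have "r \<le> 0" by (simp add: r_def x_def)
    with True that[of 0] \<open>0 < m\<close> show thesis by (simp add: r_def x_def)
  next
    case False
    then have "2 \<le> x" using q by (simp add: x_def)
    have "\<alpha> - r < 1 / (2 * x ^ 2)"
      using close_below_imp_legendre_bound[OF \<open>0 < \<gamma>\<close> \<open>\<gamma> \<le> 1 / 2\<close> \<open>3 \<le> \<tau>\<close> \<open>2 \<le> x\<close> \<open>x powr \<tau> < Q\<close>
          \<open>\<alpha> - B < 1 / Q ^ 2\<close> y close'] .
    moreover have "0 < \<alpha> - r" using below \<open>B < \<alpha>\<close> by (simp add: r_def x_def)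
    ultimately obtain n where "even n" "cf_q \<alpha> n \<le> q" and r_eq: "r = of_int (cf_p \<alpha> n) / of_int (cf_q \<alpha> n)"
      using cf_legendre[OF q(1), of p] by (auto simp: r_def x_def)
    have "x < Q" using powr_mono[of 1 \<tau> x] \<open>1 \<le> x\<close> \<open>3 \<le> \<tau>\<close> \<open>x powr \<tau> < Q\<close> by simp
    then have "n < m" using cf_q_mono[of m n] \<open>cf_q \<alpha> n \<le> q\<close> by (force simp: Q_def x_def)
    with \<open>even n\<close> \<open>cf_q \<alpha> n \<le> q\<close> r_eq show thesis using that by (simp add: r_def x_def)
  qed
qed

lemma far_from_small_denominator_fractions:
  fixes \<alpha> \<gamma> \<tau> y :: real and m :: nat and p q :: int
  defines "Q \<equiv> real_of_int (cf_q \<alpha> m)" and "B \<equiv> real_of_int (cf_p \<alpha> m) / of_int (cf_q \<alpha> m)"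
  assumes D: "\<alpha> \<in> Dioph \<gamma> \<tau>" and "0 < \<gamma>" "3 \<le> \<tau>" "even m" "0 < m"
    and y: "B - 1 / (2 * Q ^ 2) \<le> y" "y \<le> B - \<gamma> / Q powr (\<tau> + 1)"
    and earlier: "\<And>n. even n \<Longrightarrow> n < m \<Longrightarrow>
      of_int (cf_p \<alpha> n) / of_int (cf_q \<alpha> n) + \<gamma> / of_int (cf_q \<alpha> n) powr (\<tau> + 1) < y"
    and q: "0 < q" "of_int q \<le> Q"
  shows "\<gamma> / of_int q powr (\<tau> + 1) \<le> \<bar>y - of_int p / of_int q\<bar>"
proof -
  interpret cf_irrational \<alpha> by (rule cf_irrational_Dioph[OF D \<open>0 < \<gamma>\<close>])
  define r where "r = real_of_int p / of_int q"
  have "B < \<alpha>" using cf_even_convergent_less[OF \<open>even m\<close>] by (simp add: B_def)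
  have "0 \<le> \<gamma> / Q powr (\<tau> + 1)" using \<open>0 < \<gamma>\<close> by simp
  with y \<open>B < \<alpha>\<close> have "y < \<alpha>" by linarith
  consider "\<alpha> \<le> r" | "B \<le> r" "r < \<alpha>" | "r < B" by linarith
  then show ?thesis
  proof cases
    case 1
    have "\<gamma> / of_int q powr (\<tau> + 1) \<le> \<bar>\<alpha> - r\<bar>" using D q(1) by (simp add: mem_Dioph_iff r_def)
    with 1 \<open>y < \<alpha>\<close> show ?thesis by (simp add: r_def)
  next
    case 2
    then have "Q \<le> of_int q" using cf_q_le_den_between[OF q(1), of m p] by (simp add: B_def Q_def r_def)
    then have "\<gamma> / of_int q powr (\<tau> + 1) \<le> \<gamma> / Q powr (\<tau> + 1)"
      using \<open>0 < \<gamma>\<close> \<open>3 \<le> \<tau>\<close> cf_q_ge_one[of m] by (intro divide_left_mono powr_mono2) (auto simp: Q_def)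
    with 2 y show ?thesis by (simp add: r_def)
  next
    case 3
    show ?thesis
    proof (rule ccontr)
      assume "\<not> ?thesis"
      then have close: "\<bar>y - of_int p / of_int q\<bar> < \<gamma> / of_int q powr (\<tau> + 1)" by simp
      obtain n where "even n" "n < m" "cf_q \<alpha> n \<le> q" and above: "r \<le> of_int (cf_p \<alpha> n) / of_int (cf_q \<alpha> n)"
        using exists_convergent_above_close_fraction[OF D \<open>0 < \<gamma>\<close> \<open>3 \<le> \<tau>\<close> \<open>even m\<close> \<open>0 < m\<close>
            y(1)[unfolded B_def Q_def] q(1) q(2)[unfolded Q_def] 3[unfolded r_def B_def] close]
        by (auto simp: r_def)
      have "\<gamma> / of_int q powr (\<tau> + 1) \<le> \<gamma> / of_int (cf_q \<alpha> n) powr (\<tau> + 1)"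
        using \<open>0 < \<gamma>\<close> \<open>3 \<le> \<tau>\<close> \<open>cf_q \<alpha> n \<le> q\<close> cf_q_ge_one[of n]
        by (intro divide_left_mono powr_mono2) auto
      with close above earlier[OF \<open>even n\<close> \<open>n < m\<close>] show False by (simp add: r_def)
    qed
  qed
qed

lemma gap_width_bounds:
  fixes \<gamma> \<tau> Q :: real
  defines "\<delta> \<equiv> 2 * \<gamma> / Q powr (\<tau> - 1)"
  assumes "0 < \<gamma>" "\<gamma> \<le> 1 / 2" "4 \<le> Q" "3 \<le> Q powr (\<tau> - 3)"
  shows "\<gamma> / Q powr (\<tau> + 1) + \<delta> \<le> 1 / (2 * Q ^ 2)"
    and "2 * \<gamma> * \<delta> / Q powr (\<tau> - 1) + 6 * \<gamma> / Q powr \<tau> < \<delta>"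
proof -
  define b where "b = \<gamma> / Q powr (\<tau> - 1)"
  have "\<gamma> / Q powr (\<tau> + 1) \<le> b"
    unfolding b_def using assms(2,4) by (intro divide_left_mono powr_mono) auto
  moreover have "Q powr (\<tau> - 1) = Q powr (\<tau> - 3) * Q ^ 2"
    using assms(4) powr_add[of Q "\<tau> - 3" 2] by (simp add: powr_numeral)
  then have "3 * Q ^ 2 \<le> Q powr (\<tau> - 1)" using assms(5) by (simp add: mult_right_mono)
  then have "b \<le> \<gamma> / (3 * Q ^ 2)" unfolding b_def using assms(2,4) by (intro divide_left_mono) auto
  then have "3 * b \<le> 1 / (2 * Q ^ 2)" using assms(3,4) by (simp add: field_simps)
  moreover have "\<delta> = 2 * b" by (simp add: \<delta>_def b_def)
  ultimately show shift: "\<gamma> / Q powr (\<tau> + 1) + \<delta> \<le> 1 / (2 * Q ^ 2)" by linarith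
  have "0 < \<delta>" using assms(2,4) by (simp add: \<delta>_def)
  have "\<delta> \<le> 1 / 32"
  proof -
    have "16 \<le> Q ^ 2" using mult_mono[OF assms(4) assms(4)] assms(4) by (simp add: power2_eq_square)
    then have "1 / (2 * Q ^ 2) \<le> 1 / 32" by (intro divide_left_mono) auto
    moreover have "0 \<le> \<gamma> / Q powr (\<tau> + 1)" using assms(2) by simp
    ultimately show ?thesis using shift by linarith
  qed
  have "Q powr \<tau> = Q powr (\<tau> - 1) * Q" using assms(4) powr_add[of Q "\<tau> - 1" 1] by simp
  then have "2 * \<gamma> * \<delta> / Q powr (\<tau> - 1) + 6 * \<gamma> / Q powr \<tau> = \<delta> * \<delta> + 3 * \<delta> / Q"
    by (simp add: \<delta>_def field_simps)
  also have "\<dots> \<le> \<delta> / 32 + 3 * \<delta> / 4"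
    using \<open>\<delta> \<le> 1 / 32\<close> \<open>0 < \<delta>\<close> assms(4)
    by (intro add_mono divide_left_mono) (auto simp: mult_left_mono[of _ "1 / 32" \<delta>, simplified])
  finally show "2 * \<gamma> * \<delta> / Q powr (\<tau> - 1) + 6 * \<gamma> / Q powr \<tau> < \<delta>" using \<open>0 < \<delta>\<close> by simp
qed

definition gap_index :: "real \<Rightarrow> real \<Rightarrow> real \<Rightarrow> nat \<Rightarrow> bool" where
  "gap_index \<alpha> \<gamma> \<tau> m \<longleftrightarrow> even m \<and> (\<forall>n. even n \<and> n < m \<longrightarrow>
     of_int (cf_p \<alpha> n) / of_int (cf_q \<alpha> n) + \<gamma> / of_int (cf_q \<alpha> n) powr (\<tau> + 1)
     < of_int (cf_p \<alpha> m) / of_int (cf_q \<alpha> m) - \<gamma> / of_int (cf_q \<alpha> m) powr (\<tau> + 1)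
       - 2 * \<gamma> / of_int (cf_q \<alpha> m) powr (\<tau> - 1))"

lemma Dioph_point_below_gap_index:
  fixes \<alpha> \<gamma> \<tau> :: real and m :: nat
  defines "Q \<equiv> real_of_int (cf_q \<alpha> m)" and "B \<equiv> real_of_int (cf_p \<alpha> m) / of_int (cf_q \<alpha> m)"
  assumes D: "\<alpha> \<in> Dioph \<gamma> \<tau>" and "0 < \<gamma>" "3 \<le> \<tau>" "gap_index \<alpha> \<gamma> \<tau> m"
    and "4 \<le> Q" "3 \<le> Q powr (\<tau> - 3)"
  shows "\<exists>y\<in>Dioph \<gamma> \<tau>. y < \<alpha> \<and> \<alpha> - y < 2 / Q"
proof -
  interpret cf_irrational \<alpha> by (rule cf_irrational_Dioph[OF D \<open>0 < \<gamma>\<close>])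
  define \<delta> where "\<delta> = 2 * \<gamma> / Q powr (\<tau> - 1)"
  define R where "R = B - \<gamma> / Q powr (\<tau> + 1)"
  have "even m" and earlier: "\<And>n. even n \<Longrightarrow> n < m \<Longrightarrow>
      of_int (cf_p \<alpha> n) / of_int (cf_q \<alpha> n) + \<gamma> / of_int (cf_q \<alpha> n) powr (\<tau> + 1) < R - \<delta>"
    using \<open>gap_index \<alpha> \<gamma> \<tau> m\<close> by (simp_all add: gap_index_def R_def \<delta>_def B_def Q_def)
  have "0 < m" using \<open>4 \<le> Q\<close> by (cases "m = 0") (auto simp: Q_def)
  have "\<gamma> \<le> 1 / 2" by (rule Dioph_le_half[OF D])
  note width = gap_width_bounds[OF \<open>0 < \<gamma>\<close> \<open>\<gamma> \<le> 1 / 2\<close> \<open>4 \<le> Q\<close> \<open>3 \<le> Q powr (\<tau> - 3)\<close>, folded \<delta>_def]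
  have "0 < \<delta>" using \<open>0 < \<gamma>\<close> \<open>4 \<le> Q\<close> by (simp add: \<delta>_def)
  have N: "real (nat (cf_q \<alpha> m)) = Q" using cf_q_ge_one[of m] by (simp add: Q_def)
  have "\<exists>y\<in>{R - \<delta>..R}. \<forall>p q :: int. Q < of_int q \<longrightarrow>
      \<gamma> / of_int q powr (\<tau> + 1) \<le> \<bar>y - of_int p / of_int q\<bar>"
    using exists_far_from_large_denominator_fractions[of "R - \<delta>" R \<gamma> \<tau> "nat (cf_q \<alpha> m)", unfolded N]
      width(2) \<open>0 < \<delta>\<close> \<open>0 < \<gamma>\<close> \<open>\<gamma> \<le> 1 / 2\<close> \<open>3 \<le> \<tau>\<close> cf_q_ge_one[of m]
    by simp
  then obtain y where y: "y \<in> {R - \<delta>..R}" and large: "\<And>p q :: int. Q < of_int q \<Longrightarrow>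
      \<gamma> / of_int q powr (\<tau> + 1) \<le> \<bar>y - of_int p / of_int q\<bar>"
    by blast
  have "B < \<alpha>" "\<alpha> - B < 1 / Q ^ 2"
    using cf_even_convergent_less[OF \<open>even m\<close>] cf_dist_convergent_less[of m] by (simp_all add: B_def Q_def)
  have "R \<le> B" using \<open>0 < \<gamma>\<close> by (simp add: R_def)
  have "B - 1 / (2 * Q ^ 2) \<le> R - \<delta>" using width(1) by (simp add: R_def)
  have "y \<in> Dioph \<gamma> \<tau>"
    unfolding mem_Dioph_iff
  proof (intro conjI allI impI)
    show "0 < y" using earlier[of 0] \<open>0 < m\<close> \<open>0 < \<gamma>\<close> y by simp
    show "y < 1" using y \<open>R \<le> B\<close> \<open>B < \<alpha>\<close> less_one by simp
    fix p q :: int assume "0 < q"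
    show "\<gamma> / of_int q powr (\<tau> + 1) \<le> \<bar>y - of_int p / of_int q\<bar>"
    proof (cases "of_int q \<le> Q")
      case True
      have "B - 1 / (2 * Q ^ 2) \<le> y" "y \<le> B - \<gamma> / Q powr (\<tau> + 1)"
        using y \<open>B - 1 / (2 * Q ^ 2) \<le> R - \<delta>\<close> by (simp_all add: R_def)
      with True earlier y show ?thesis
        using far_from_small_denominator_fractions[OF D \<open>0 < \<gamma>\<close> \<open>3 \<le> \<tau>\<close> \<open>even m\<close> \<open>0 < m\<close> _ _ _ \<open>0 < q\<close>]
        unfolding B_def Q_def by fastforce
    qed (use large in simp)
  qed
  moreover have "y < \<alpha>" using y \<open>R \<le> B\<close> \<open>B < \<alpha>\<close> by simp
  moreover have "\<alpha> - y < 2 / Q"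
  proof -
    have "\<alpha> - y < 1 / Q ^ 2 + 1 / (2 * Q ^ 2)"
      using y \<open>\<alpha> - B < 1 / Q ^ 2\<close> \<open>B - 1 / (2 * Q ^ 2) \<le> R - \<delta>\<close> by simp
    also have "\<dots> \<le> 2 / Q" using \<open>4 \<le> Q\<close> by (simp add: field_simps power2_eq_square)
    finally show ?thesis .
  qed
  ultimately show ?thesis by blast
qed

theorem lemma9:
  fixes \<tau> \<gamma> \<alpha> :: real
  assumes "\<tau> > (3 + sqrt 17) / 2"
    and "\<gamma> > 0"
    and "\<alpha> \<in> Dioph \<gamma> \<tau>"
    and "\<forall>n. even n \<longrightarrow>
           \<alpha> - of_int (cf_p \<alpha> n) / of_int (cf_q \<alpha> n) > \<gamma> / of_int (cf_q \<alpha> n) powr (\<tau> + 1)"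
    and "infinite {m. even m \<and> (\<forall>n. even n \<and> n < m \<longrightarrow>
           of_int (cf_p \<alpha> n) / of_int (cf_q \<alpha> n) + \<gamma> / of_int (cf_q \<alpha> n) powr (\<tau> + 1)
           < of_int (cf_p \<alpha> m) / of_int (cf_q \<alpha> m) - \<gamma> / of_int (cf_q \<alpha> m) powr (\<tau> + 1)
             - 2 * \<gamma> / of_int (cf_q \<alpha> m) powr (\<tau> - 1))}"
  shows "\<alpha> islimpt Dioph \<gamma> \<tau>"
proof -
  have "3 < sqrt 17" by (rule real_less_rsqrt) simp
  with assms(1) have "3 < \<tau>" by simp
  interpret cf_irrational \<alpha> by (rule cf_irrational_Dioph[OF assms(3,2)])
  show ?thesis unfolding islimpt_approachable
  proof (intro allI impI)
    fix \<epsilon> :: real assume "0 < \<epsilon>"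
    have "\<forall>\<^sub>F x in at_top. 4 \<le> x \<and> 3 \<le> x powr (\<tau> - 3) \<and> 2 / x < \<epsilon>"
      using \<open>3 < \<tau>\<close> \<open>0 < \<epsilon>\<close> by (intro eventually_conj; real_asymp)
    from eventually_compose_filterlim[OF this filterlim_cf_q_at_top]
    obtain M where large: "\<And>m. M \<le> m \<Longrightarrow> 4 \<le> real_of_int (cf_q \<alpha> m) \<and>
        3 \<le> real_of_int (cf_q \<alpha> m) powr (\<tau> - 3) \<and> 2 / real_of_int (cf_q \<alpha> m) < \<epsilon>"
      by (auto simp: eventually_sequentially)
    from assms(5) obtain m where "M \<le> m" "gap_index \<alpha> \<gamma> \<tau> m"
      unfolding infinite_nat_iff_unbounded_le gap_index_def by blast
    then obtain y where "y \<in> Dioph \<gamma> \<tau>" "y < \<alpha>" "\<alpha> - y < 2 / of_int (cf_q \<alpha> m)"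
      using Dioph_point_below_gap_index[OF assms(3,2)] \<open>3 < \<tau>\<close> large by fastforce
    with large[OF \<open>M \<le> m\<close>] show "\<exists>y\<in>Dioph \<gamma> \<tau>. y \<noteq> \<alpha> \<and> dist y \<alpha> < \<epsilon>"
      by (intro bexI[of _ y]) (auto simp: dist_real_def)
  qed
qed

end
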